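(* Let $n\ge 2$ and let $G=(V,A,s,t)$ be a doubly-rooted digraph with $|V|=n$, edges enumerated $A=\{a_1,\dots,a_{4n-1}\}$, and $B\subseteq A$ with $|B|\le 3$. Let $A^*=A\cup\{a_0,a_{4n}\}$, where $a_0$ is a new edge with $a_0^+=s$ and $a_{4n}$ is a new edge with $a_{4n}^-=t$ (their other endpoints being a new vertex $r$). For any $a\in A$ that is not a loop, \[S(G,B)=\sum_{c\in A^*:\,c^+=a^-}S(G_{a,c},B_{a,c})-\sum_{d\in A^*:\,d^-=a^+}S(G^{a,d},B^{a,d}),\] where all digraphs are given the enumerations described below.
   Context: For a doubly-rooted digraph $H$ with edges indexed by $\{1,\dots,k\}$ and $B'\subseteq A(H)$: $M(B')$ is the set of indices of edges in $B'$; $P(H)$ is the set of $\sigma\in\mathfrak{S}_k$ such that $(e_{\sigma(1)},\dots,e_{\sigma(k)})$ (with $e_j$ the edge of index $j$) is a directed Eulerian trail from the first root to the second root; for $M=\{j_1<\dots<j_\ell\}$, $\sigma_M\in\mathfrak{S}_\ell$ is $\sigma_M(g)=|\{h:\sigma(j_h)\le\sigma(j_g)\}|$; $S(H,B')=\sum_{\sigma\in P(H)}\mathrm{sgn}(\sigma)\mathrm{sgn}(\sigma_{M(B')})$. Edge $a$ has source $a^-$, target $a^+$; loops and multiple edges allowed. Constructions. For $c\in A$ with $c^+=a^-$: $G_{a,c}$ has vertex set $V$, roots $(s,t)$, and edge set obtained from $A$ by replacing $a$ with a loop $\overline{a}$ at $a^+$ (given the index of $a$) and $c$ with an edge $c_a$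 from $c^-$ to $a^+$ (given the index of $c$). For $d\in A$ with $d^-=a^+$: $G^{a,d}$ has vertex set $V$, roots $(s,t)$, and edge set obtained from $A$ by replacing $a$ with a loop $\overline{a}$ at $a^+$ (index of $a$) and $d$ with an edge $d^a$ from $a^-$ to $d^+$ (index of $d$). If $c=a_0$ (possible only when $s=a^-$), $G_{a,a_0}$ has vertex set $V$, edge set $(A\setminus\{a\})\cup\{\overline{a}\}$ ($\overline{a}$ a loop at $a^+$ with the index of $a$) and roots $(a^+,t)$. If $d=a_{4n}$ (possible only when $t=a^+$), $G^{a,a_{4n}}$ has vertex set $V$, edge set $(A\setminus\{a\})\cup\{\overline{a}\}$ and roots $(s,a^-)$. In all cases $B_{a,c}$ (resp. $B^{a,d}$) is obtained from $B$ by replacing $a$ by $\overline{a}$ and $c$ by $c_a$ (resp. $d$ by $d^a$) whenever these lie in $B$; thus the index sets of the distinguished edges are unchanged. *)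

theory Defs
  imports "HOL-Combinatorics.Permutations"
begin

text \<open>A doubly-rooted digraph with edges indexed by 1..k is encoded as a tuple
  (src, tgt, s, t): edge of index j goes from src j to tgt j; roots s (first), t (second).
  Distinguished edge sets B' are encoded by their index sets M.\<close>

type_synonym 'v drd = "(nat \<Rightarrow> 'v) \<times> (nat \<Rightarrow> 'v) \<times> 'v \<times> 'v"

definition is_trail :: "nat \<Rightarrow> 'v drd \<Rightarrow> (nat \<Rightarrow> nat) \<Rightarrow> bool" where
  "is_trail k H \<sigma> = (case H of (src, tgt, s, t) \<Rightarrow>
     (if k = 0 then s = t
      else src (\<sigma> 1) = s \<and> tgt (\<sigma> k) = t \<and>
           (\<forall>i\<in>{1..<k}. tgt (\<sigma> i) = src (\<sigma> (Suc i)))))"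

definition Ptrails :: "nat \<Rightarrow> 'v drd \<Rightarrow> (nat \<Rightarrow> nat) set" where
  "Ptrails k H = {\<sigma>. \<sigma> permutes {1..k} \<and> is_trail k H \<sigma>}"

definition restr_perm :: "(nat \<Rightarrow> nat) \<Rightarrow> nat set \<Rightarrow> nat \<Rightarrow> nat" where
  "restr_perm \<sigma> M = (\<lambda>g. if g \<in> {1..card M} then
       card {h \<in> {1..card M}. \<sigma> (sorted_list_of_set M ! (h - 1)) \<le> \<sigma> (sorted_list_of_set M ! (g - 1))}
     else g)"

definition Ssum :: "nat \<Rightarrow> 'v drd \<Rightarrow> nat set \<Rightarrow> int" where
  "Ssum k H M = (\<Sum>\<sigma>\<in>Ptrails k H. sign \<sigma> * sign (restr_perm \<sigma> M))"

text \<open>G_{a,c}: a has index i; c = 0 encodes the new edge a_0.\<close>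
definition G_low :: "nat \<Rightarrow> 'v drd \<Rightarrow> nat \<Rightarrow> 'v drd" where
  "G_low i H c = (case H of (src, tgt, s, t) \<Rightarrow>
     (if c = 0 then (src(i := tgt i), tgt, tgt i, t)
      else (src(i := tgt i), tgt(c := tgt i), s, t)))"

text \<open>G^{a,d}: a has index i; d = k+1 encodes the new edge a_{4n}.\<close>
definition G_up :: "nat \<Rightarrow> nat \<Rightarrow> 'v drd \<Rightarrow> nat \<Rightarrow> 'v drd" where
  "G_up k i H d = (case H of (src, tgt, s, t) \<Rightarrow>
     (if d = k + 1 then (src(i := tgt i), tgt, s, src i)
      else (src(i := tgt i, d := src i), tgt, s, t)))"

end

theory Submission
  imports Defs
begin

text \<open>Both signs in a term of S depend only on the permutation \<sigma> and on M, which are the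
  same in all digraphs of the identity, so it suffices to prove it for a fixed \<sigma>, counting
  the digraphs of which \<sigma> is a trail. Pad \<sigma> with a_0 in front and a_{4n} at the end.
  If \<sigma> is a trail of G_{a,c}, let d be the edge following c: either c immediately precedes a,
  and then \<sigma> is a trail of G, or d starts at a^+ and \<sigma> is a trail of G^{a,d}; conversely every
  trail of G and of each G^{a,d} arises in this way.\<close>

text \<open>Heads and tails of the edges of A*, where index 0 stands for a_0 (head s) and
  index k + 1 for a_{4n} (tail t).\<close>

definition heads :: "'v drd \<Rightarrow> nat \<Rightarrow> 'v" where
  "heads H = (case H of (src, tgt, s, t) \<Rightarrow> \<lambda>c. if c = 0 then s else tgt c)"

definition tails :: "nat \<Rightarrow> 'v drd \<Rightarrow> nat \<Rightarrow> 'v" where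
  "tails k H = (case H of (src, tgt, s, t) \<Rightarrow> \<lambda>d. if d = k + 1 then t else src d)"

definition linked :: "nat \<Rightarrow> (nat \<Rightarrow> 'v) \<Rightarrow> (nat \<Rightarrow> 'v) \<Rightarrow> bool" where
  "linked k hs ts \<longleftrightarrow> (\<forall>j\<le>k. hs j = ts (Suc j))"

lemma fun_upd_comp_inj: "inj g \<Longrightarrow> f(g x := y) \<circ> g = (f \<circ> g)(x := y)"
  by (auto simp: fun_eq_iff dest: injD)

lemma sum_of_bool_filter_reindex:
  assumes "bij_betw g B A" and "finite A"
  shows "(\<Sum>a\<in>{a\<in>A. P a}. of_bool (Q a) :: 'b::comm_semiring_1) =
    (\<Sum>b\<in>B. of_bool (P (g b) \<and> Q (g b)))"
proof -
  have "(\<Sum>a\<in>{a\<in>A. P a}. of_bool (Q a) :: 'b) = (\<Sum>a\<in>A. of_bool (P a \<and> Q a))"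
    unfolding sum.inter_filter[OF \<open>finite A\<close>] by (rule sum.cong) auto
  also have "\<dots> = (\<Sum>b\<in>B. of_bool (P (g b) \<and> Q (g b)))"
    by (rule sum.reindex_bij_betw[OF assms(1), symmetric])
  finally show ?thesis .
qed

lemma all_le_split_ends:
  assumes "1 \<le> (k::nat)"
  shows "(\<forall>j\<le>k. P j) \<longleftrightarrow> P 0 \<and> P k \<and> (\<forall>j\<in>{1..<k}. P j)"
proof (intro iffI allI impI)
  fix j assume "P 0 \<and> P k \<and> (\<forall>j\<in>{1..<k}. P j)" "j \<le> k"
  then show "P j" by (cases "j = 0 \<or> j = k") auto
qed (use assms in auto)

lemma is_trail_iff_linked:
  assumes perm: "\<sigma> permutes {1..k}" and "1 \<le> k"
  shows "is_trail k H \<sigma> \<longleftrightarrow> linked k (heads H \<circ> \<sigma>) (tails k H \<circ> \<sigma>)"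
proof -
  obtain src tgt s t where H: "H = (src, tgt, s, t)"
    by (cases H) auto
  have inner: "\<sigma> j \<in> {1..k}" if "j \<in> {1..k}" for j
    using permutes_in_image[OF perm] that by blast
  have "heads H (\<sigma> j) = (if j = 0 then s else tgt (\<sigma> j))" if "j \<le> k" for j
    using that inner[of j] permutes_not_in[OF perm, of 0] by (auto simp: H heads_def)
  moreover have "tails k H (\<sigma> (Suc j)) = (if j = k then t else src (\<sigma> (Suc j)))" if "j \<le> k" for j
    using that inner[of "Suc j"] permutes_not_in[OF perm, of "Suc k"] by (auto simp: H tails_def)
  ultimately have "linked k (heads H \<circ> \<sigma>) (tails k H \<circ> \<sigma>) \<longleftrightarrow>
      (\<forall>j\<le>k. (if j = 0 then s else tgt (\<sigma> j)) = (if j = k then t else src (\<sigma> (Suc j))))"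
    by (simp add: linked_def)
  also have "\<dots> \<longleftrightarrow>
      s = src (\<sigma> 1) \<and> tgt (\<sigma> k) = t \<and> (\<forall>j\<in>{1..<k}. tgt (\<sigma> j) = src (\<sigma> (Suc j)))"
    using \<open>1 \<le> k\<close> by (subst all_le_split_ends) auto
  finally show ?thesis
    using \<open>1 \<le> k\<close> by (auto simp: is_trail_def H)
qed

lemma heads_G_low: "heads (G_low i (src, tgt, s, t) c) = (heads (src, tgt, s, t))(c := tgt i)"
  by (auto simp: heads_def G_low_def)

lemma tails_G_low:
  "i \<noteq> k + 1 \<Longrightarrow> tails k (G_low i (src, tgt, s, t) c) = (tails k (src, tgt, s, t))(i := tgt i)"
  by (auto simp: tails_def G_low_def)

lemma heads_G_up: "heads (G_up k i (src, tgt, s, t) d) = heads (src, tgt, s, t)"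
  by (auto simp: heads_def G_up_def)

lemma tails_G_up:
  "i \<noteq> k + 1 \<Longrightarrow>
    tails k (G_up k i (src, tgt, s, t) d) = (tails k (src, tgt, s, t))(i := tgt i, d := src i)"
  by (auto simp: tails_def G_up_def)

text \<open>In the trail order, position p holds the edge a (from u to w), position q the edge c and
  position Suc q the edge d.\<close>

lemma linked_splice_iff:
  assumes "p \<le> k" "q \<le> k" "hs p = w" "ts p = u" "u \<noteq> w"
  shows "hs q = u \<and> linked k (hs(q := w)) (ts(p := w)) \<longleftrightarrow>
    (Suc q = p \<and> linked k hs ts) \<or> (ts (Suc q) = w \<and> linked k hs (ts(p := w, Suc q := u)))"
proof (cases "Suc q = p")
  case True
  then have "(hs(q := w)) j = (ts(p := w)) (Suc j) \<longleftrightarrow> j = q \<or> hs j = ts (Suc j)" for j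
    by auto
  then show ?thesis
    using True assms unfolding linked_def by auto
next
  case False
  then have "(hs(q := w)) j = (ts(p := w)) (Suc j) \<longleftrightarrow>
      (if j = q then ts (Suc q) = w else hs j = (ts(p := w)) (Suc j))"
    and "hs j = (ts(p := w, Suc q := u)) (Suc j) \<longleftrightarrow>
      (if j = q then hs q = u else hs j = (ts(p := w)) (Suc j))" for j
    by auto
  then show ?thesis
    using False assms unfolding linked_def by auto
qed

lemma sum_linked_splice:
  assumes p: "p \<in> {1..k}" and "hs p = w" "ts p = u" "u \<noteq> w"
  shows "(\<Sum>q\<in>{0..k}. of_bool (hs q = u \<and> linked k (hs(q := w)) (ts(p := w))) :: int) =
    of_bool (linked k hs ts) +
    (\<Sum>q\<in>{0..k}. of_bool (ts (Suc q) = w \<and> linked k hs (ts(p := w, Suc q := u))))"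
proof -
  have "(\<Sum>q\<in>{0..k}. of_bool (Suc q = p \<and> linked k hs ts) :: int) =
      (\<Sum>q\<in>{0..k}. if q = p - 1 then of_bool (linked k hs ts) else 0)"
    using p by (intro sum.cong) auto
  also have "\<dots> = of_bool (linked k hs ts)"
    using p by auto
  finally have adjacent: "(\<Sum>q\<in>{0..k}. of_bool (Suc q = p \<and> linked k hs ts) :: int) =
      of_bool (linked k hs ts)" .
  have "(\<Sum>q\<in>{0..k}. of_bool (hs q = u \<and> linked k (hs(q := w)) (ts(p := w))) :: int) =
      (\<Sum>q\<in>{0..k}. of_bool (Suc q = p \<and> linked k hs ts)
        + of_bool (ts (Suc q) = w \<and> linked k hs (ts(p := w, Suc q := u))))"
  proof (rule sum.cong)
    fix q assume "q \<in> {0..k}"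
    then show "of_bool (hs q = u \<and> linked k (hs(q := w)) (ts(p := w))) =
        (of_bool (Suc q = p \<and> linked k hs ts)
          + of_bool (ts (Suc q) = w \<and> linked k hs (ts(p := w, Suc q := u))) :: int)"
      using linked_splice_iff[of p k q hs w ts u] p assms by auto
  qed simp
  then show ?thesis
    by (simp only: sum.distrib adjacent)
qed

lemma of_bool_is_trail_recurrence:
  fixes src tgt :: "nat \<Rightarrow> 'v" and s t :: 'v
  assumes perm: "\<sigma> permutes {1..k}" and i: "i \<in> {1..k}" and loopfree: "src i \<noteq> tgt i"
  defines "H \<equiv> (src, tgt, s, t)"
  shows "(of_bool (is_trail k H \<sigma>) :: int) =
     (\<Sum>c\<in>{c\<in>{0..k}. heads H c = src i}. of_bool (is_trail k (G_low i H c) \<sigma>))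
   - (\<Sum>d\<in>{d\<in>{1..k+1}. tails k H d = tgt i}. of_bool (is_trail k (G_up k i H d) \<sigma>))"
proof -
  have k: "1 \<le> k" using i by simp
  obtain p where p: "p \<in> {1..k}" "\<sigma> p = i"
    using i permutes_image[OF perm] by (metis imageE)
  define hs where "hs = heads H \<circ> \<sigma>"
  define ts where "ts = tails k H \<circ> \<sigma>"
  have hs_p: "hs p = tgt i" and ts_p: "ts p = src i"
    using i p by (simp_all add: hs_def ts_def H_def heads_def tails_def)
  have inj: "inj \<sigma>"
    using perm by (rule permutes_inj)
  have bij0: "bij_betw \<sigma> {0..k} {0..k}"
    by (rule permutes_imp_bij, rule permutes_subset[OF perm]) auto
  have bij1: "bij_betw (\<sigma> \<circ> Suc) {0..k} {1..k+1}"
  proof (rule bij_betw_trans)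
    show "bij_betw Suc {0..k} {1..k+1}" by simp
    show "bij_betw \<sigma> {1..k+1} {1..k+1}"
      by (rule permutes_imp_bij, rule permutes_subset[OF perm]) auto
  qed
  have low: "heads H (\<sigma> q) = src i \<and> is_trail k (G_low i H (\<sigma> q)) \<sigma> \<longleftrightarrow>
      hs q = src i \<and> linked k (hs(q := tgt i)) (ts(p := tgt i))" for q
  proof -
    have "heads (G_low i H (\<sigma> q)) \<circ> \<sigma> = hs(q := tgt i)"
      unfolding H_def heads_G_low hs_def by (rule fun_upd_comp_inj[OF inj])
    moreover have "tails k (G_low i H (\<sigma> q)) \<circ> \<sigma> = ts(p := tgt i)"
      using i by (simp add: H_def tails_G_low ts_def fun_upd_comp_inj[OF inj] p(2)[symmetric])
    ultimately show ?thesis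
      by (simp add: is_trail_iff_linked[OF perm k] hs_def)
  qed
  have up: "tails k H (\<sigma> (Suc q)) = tgt i \<and> is_trail k (G_up k i H (\<sigma> (Suc q))) \<sigma> \<longleftrightarrow>
      ts (Suc q) = tgt i \<and> linked k hs (ts(p := tgt i, Suc q := src i))" for q
  proof -
    have "tails k (G_up k i H (\<sigma> (Suc q))) \<circ> \<sigma> = ts(p := tgt i, Suc q := src i)"
      using i by (simp add: H_def tails_G_up ts_def fun_upd_comp_inj[OF inj] p(2)[symmetric])
    then show ?thesis
      by (simp add: is_trail_iff_linked[OF perm k] hs_def ts_def H_def heads_G_up)
  qed
  have trail: "is_trail k H \<sigma> \<longleftrightarrow> linked k hs ts"
    unfolding hs_def ts_def by (rule is_trail_iff_linked[OF perm k])
  show ?thesis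
    unfolding sum_of_bool_filter_reindex[OF bij0 finite_atLeastAtMost]
      sum_of_bool_filter_reindex[OF bij1 finite_atLeastAtMost] o_apply low up trail
    using sum_linked_splice[where hs = hs and ts = ts, OF p(1) hs_p ts_p loopfree]
    by linarith
qed

lemma Ssum_eq_sum_permutes:
  "Ssum k H M =
    (\<Sum>\<sigma> | \<sigma> permutes {1..k}. sign \<sigma> * sign (restr_perm \<sigma> M) * of_bool (is_trail k H \<sigma>))"
  (is "_ = ?rhs")
proof -
  have fin: "finite {\<sigma>. \<sigma> permutes {1..k}}"
    by (rule finite_permutations) simp
  have "Ssum k H M =
      (\<Sum>\<sigma>\<in>{\<sigma> \<in> {\<sigma>. \<sigma> permutes {1..k}}. is_trail k H \<sigma>}. sign \<sigma> * sign (restr_perm \<sigma> M))"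
    by (simp add: Ssum_def Ptrails_def)
  also have "\<dots> = ?rhs"
    unfolding sum.inter_filter[OF fin] by (intro sum.cong) simp_all
  finally show ?thesis .
qed

theorem lemma4p5:
  fixes n k :: nat and V :: "'v set" and src tgt :: "nat \<Rightarrow> 'v" and s t :: 'v
    and M :: "nat set" and i :: nat
  assumes "n \<ge> 2" and "finite V" and "card V = n"
    and "k = 4 * n - 1"
    and "s \<in> V" and "t \<in> V"
    and "\<forall>j\<in>{1..k}. src j \<in> V \<and> tgt j \<in> V"
    and "M \<subseteq> {1..k}" and "card M \<le> 3"
    and "i \<in> {1..k}" and "src i \<noteq> tgt i"
  shows "Ssum k (src, tgt, s, t) M =
     (\<Sum>c\<in>{c\<in>{0..k}. (if c = 0 then s else tgt c) = src i}.
         Ssum k (G_low i (src, tgt, s, t) c) M)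
   - (\<Sum>d\<in>{d\<in>{1..k+1}. (if d = k + 1 then t else src d) = tgt i}.
         Ssum k (G_up k i (src, tgt, s, t) d) M)"
proof -
  define G where "G = (src, tgt, s, t)"
  define C where "C = {c\<in>{0..k}. heads G c = src i}"
  define D where "D = {d\<in>{1..k+1}. tails k G d = tgt i}"
  define w where "w \<sigma> = sign \<sigma> * sign (restr_perm \<sigma> M)" for \<sigma> :: "nat \<Rightarrow> nat"
  have pointwise: "(of_bool (is_trail k G \<sigma>) :: int) =
      (\<Sum>c\<in>C. of_bool (is_trail k (G_low i G c) \<sigma>)) - (\<Sum>d\<in>D. of_bool (is_trail k (G_up k i G d) \<sigma>))"
    if "\<sigma> permutes {1..k}" for \<sigma>
    unfolding C_def D_def G_def
    by (rule of_bool_is_trail_recurrence[where src = src and tgt = tgt, OF that assms(10,11)])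
  have "Ssum k G M = (\<Sum>\<sigma> | \<sigma> permutes {1..k}. w \<sigma> *
      ((\<Sum>c\<in>C. of_bool (is_trail k (G_low i G c) \<sigma>)) - (\<Sum>d\<in>D. of_bool (is_trail k (G_up k i G d) \<sigma>))))"
    unfolding Ssum_eq_sum_permutes w_def by (intro sum.cong refl) (simp only: mem_Collect_eq pointwise)
  also have "\<dots> = (\<Sum>c\<in>C. Ssum k (G_low i G c) M) - (\<Sum>d\<in>D. Ssum k (G_up k i G d) M)"
    unfolding Ssum_eq_sum_permutes w_def
    by (simp only: right_diff_distrib sum_subtractf sum_distrib_left mult.assoc
        sum.swap[of _ "{\<sigma>. \<sigma> permutes {1..k}}"])
  also have "C = {c\<in>{0..k}. (if c = 0 then s else tgt c) = src i}"
    by (simp add: C_def G_def heads_def)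
  also have "D = {d\<in>{1..k+1}. (if d = k + 1 then t else src d) = tgt i}"
    by (simp add: D_def G_def tails_def)
  finally show ?thesis
    unfolding G_def .
qed

end
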